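(* Let $k$ be a natural number and let $q \in C^1(\mathbb{R}^n,\mathbb{R})$ be a scalar function such that there exists $m$ with $q(\mathbf{x}) = f(x_m)\cdot \mathbf{x}_{i\neq m}^{\beta}$ for a multi-index $\beta\in\mathbb{N}_0^{n-1}$ and $f$ any function of $x_m$ that can be integrated. Set $\lambda = \left\lceil \frac{|\beta|-1}{2}\right\rceil$ and $W(\mathbf{x}) = \mathcal{A}_{x_m}^{2\lambda+2k} q(\mathbf{x}) = \mathbf{x}_{i\neq m}^{\beta}\, \mathcal{A}_{x_m}^{2\lambda+2k} f(x_m)$. Then $$Q(\mathbf{x}) := \sum_{p=0}^{\lambda} (-1)^p \binom{k+p-1}{p} \partial_{x_m}^{2\lambda-2p}\, \Delta_{\setminus m}^{p} W(\mathbf{x}) = \sum_{p=0}^{\lambda} (-1)^p \binom{k+p-1}{p} \mathcal{A}_{x_m}^{2k+2p}\, \Delta_{\setminus m}^{p} q(\mathbf{x})$$ satisfies $\Delta^k Q = q$, where $\Delta=\sum_{i=1}^n\partial_{x_i}^2$.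
   Context: $\mathbf{x}_{i\neq m}^{\beta}$ denotes $\prod_{i\neq m} x_i^{\beta_i}$ and $|\beta|$ its total degree; $\lceil h\rceil$ is the least integer $\ge h$. The incomplete Laplacian is $\Delta_{\setminus m} f := \sum_{i\neq m}\partial_{x_i}^2 f$, with $\Delta_{\setminus m}^p$ its $p$-fold application. The antiderivative is $\mathcal{A}_{x_j} f(\mathbf{x}) := \int_{x_0}^{x_j} f(x_1,\dots,\xi_j,\dots,x_n)\,d\xi_j$ with freely chosen lower limit $x_0$, and $\mathcal{A}_{x_j}^p := \mathcal{A}_{x_j}^{p-1}\mathcal{A}_{x_j}$ (repeated integration). Zeroth powers of these operators are the identity. *)

theory Defs
  imports "HOL-Analysis.Analysis"
begin

definition vupd :: "real^'n \<Rightarrow> 'n \<Rightarrow> real \<Rightarrow> real^'n" where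
  "vupd x j t = (\<chi> i. if i = j then t else x $ i)"

definition partial :: "'n \<Rightarrow> (real^'n \<Rightarrow> real) \<Rightarrow> (real^'n \<Rightarrow> real)" where
  "partial j F = (\<lambda>x. deriv (\<lambda>t. F (vupd x j t)) (x $ j))"

definition oint :: "real \<Rightarrow> real \<Rightarrow> (real \<Rightarrow> real) \<Rightarrow> real" where
  "oint a b g = (if a \<le> b then integral {a..b} g else - integral {b..a} g)"

definition antider :: "real \<Rightarrow> 'n \<Rightarrow> (real^'n \<Rightarrow> real) \<Rightarrow> (real^'n \<Rightarrow> real)" where
  "antider x0 j F = (\<lambda>x. oint x0 (x $ j) (\<lambda>t. F (vupd x j t)))"

definition antider1 :: "real \<Rightarrow> (real \<Rightarrow> real) \<Rightarrow> (real \<Rightarrow> real)" where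
  "antider1 x0 g = (\<lambda>t. oint x0 t g)"

definition laplacian :: "(real^'n \<Rightarrow> real) \<Rightarrow> (real^'n \<Rightarrow> real)" where
  "laplacian F = (\<lambda>x. \<Sum>i\<in>UNIV. (partial i ^^ 2) F x)"

definition laplacian_without :: "'n \<Rightarrow> (real^'n \<Rightarrow> real) \<Rightarrow> (real^'n \<Rightarrow> real)" where
  "laplacian_without m F = (\<lambda>x. \<Sum>i\<in>UNIV - {m}. (partial i ^^ 2) F x)"

definition mono_wo :: "'n \<Rightarrow> ('n \<Rightarrow> nat) \<Rightarrow> real^'n \<Rightarrow> real" where
  "mono_wo m \<beta> x = (\<Prod>i\<in>UNIV - {m}. (x $ i) ^ \<beta> i)"

definition deg_wo :: "'n \<Rightarrow> ('n \<Rightarrow> nat) \<Rightarrow> nat" where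
  "deg_wo m \<beta> = (\<Sum>i\<in>UNIV - {m}. \<beta> i)"

end

theory Submission
  imports Defs
begin

(* Write \<Delta> = \<partial>_m^2 + \<Delta>', where \<Delta>' is the Laplacian in the coordinates other than x_m, and let A
   be the antiderivative in x_m.  Every function involved has the form g(x_m) P(x) with P a polynomial
   in the other coordinates; \<partial>_m and A act on g only, \<Delta>' acts on P only.  Formally
     \<Delta>^(-k) = A^(2k) (1 + A^2 \<Delta>')^(-k) = \<Sum>_p (-1)^p C(k+p-1,p) A^(2k+2p) \<Delta>'^p,
   and the series breaks off after p = \<lambda> because \<Delta>'^(\<lambda>+1) kills polynomials of degree at most
   2\<lambda>+1.  To make this rigorous, \<Delta> maps the truncated series for k+1 to the one for k, by Pascal's
   rule for the coefficients of (1+t)^(-k); for k = 0 only the term q is left. *)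

lemma vupd_nth [simp]: "vupd x j t $ i = (if i = j then t else x $ i)"
  by (simp add: vupd_def)

lemma vupd_same [simp]: "vupd x j (x $ j) = x"
  by (simp add: vupd_def vec_eq_iff)

lemma has_real_derivative_oint:
  assumes h: "continuous_on UNIV h"
  shows "((\<lambda>s. oint a s h) has_real_derivative h t) (at t)"
proof -
  define c where "c = min a t - 1"
  define b where "b = max a t + 1"
  have integrable: "h integrable_on {u..v}" for u v
    by (rule integrable_continuous_real) (rule continuous_on_subset[OF h], simp)
  have oint_eq: "oint a s h = integral {c..s} h - integral {c..a} h" if "s \<in> {c<..<b}" for s
  proof (cases "a \<le> s")
    case True
    have "integral {c..a} h + integral {a..s} h = integral {c..s} h"
      using True by (intro Henstock_Kurzweil_Integration.integral_combine integrable) (auto simp: c_def)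
    then show ?thesis using True by (simp add: oint_def)
  next
    case False
    have "integral {c..s} h + integral {s..a} h = integral {c..a} h"
      using False that by (intro Henstock_Kurzweil_Integration.integral_combine integrable) (auto simp: c_def)
    then show ?thesis using False by (simp add: oint_def)
  qed
  have "((\<lambda>s. integral {c..s} h) has_real_derivative h t) (at t within {c..b})"
    by (rule integral_has_real_derivative) (auto simp: c_def b_def intro: continuous_on_subset[OF h])
  then have "((\<lambda>s. integral {c..s} h) has_real_derivative h t) (at t)"
    by (simp add: at_within_Icc_at c_def b_def)
  then have "((\<lambda>s. integral {c..s} h - integral {c..a} h) has_real_derivative h t) (at t)"
    using DERIV_diff[OF _ DERIV_const] by fastforce
  then show ?thesis
    by (rule has_field_derivative_transform_within_open[where S="{c<..<b}"])
       (auto simp: c_def b_def oint_eq)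
qed

lemma has_real_derivative_antider1:
  "continuous_on UNIV g \<Longrightarrow> (antider1 a g has_real_derivative g t) (at t)"
  unfolding antider1_def by (rule has_real_derivative_oint)

lemma continuous_on_funpow_antider1:
  assumes "continuous_on UNIV h"
  shows "continuous_on UNIV ((antider1 x0 ^^ n) h)"
proof (induction n)
  case (Suc n)
  then show ?case
    by (auto intro: continuous_at_imp_continuous_on DERIV_isCont has_real_derivative_antider1)
qed (simp add: assms)

lemma has_real_derivative_funpow_antider1:
  assumes "continuous_on UNIV h"
  shows "((antider1 x0 ^^ Suc n) h has_real_derivative (antider1 x0 ^^ n) h t) (at t)"
  using has_real_derivative_antider1[OF continuous_on_funpow_antider1[OF assms]] by simp

inductive poly_wo :: "'n \<Rightarrow> nat \<Rightarrow> (real^'n \<Rightarrow> real) \<Rightarrow> bool" for m :: 'n where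
  const: "poly_wo m d (\<lambda>x. c)"
| mult_coord: "poly_wo m d P \<Longrightarrow> i \<noteq> m \<Longrightarrow> poly_wo m (Suc d) (\<lambda>x. x $ i * P x)"
| add: "poly_wo m d P \<Longrightarrow> poly_wo m d Q \<Longrightarrow> poly_wo m d (\<lambda>x. P x + Q x)"
| mono: "poly_wo m d P \<Longrightarrow> d \<le> e \<Longrightarrow> poly_wo m e P"

lemma poly_wo_vupd: "poly_wo m d P \<Longrightarrow> P (vupd x m t) = P x"
  by (induction rule: poly_wo.induct) auto

lemma poly_wo_has_partial:
  assumes "poly_wo m d P" "i \<noteq> m"
  shows "\<exists>P'. poly_wo m (d - 1) P' \<and> (d = 0 \<longrightarrow> P' = (\<lambda>x. 0)) \<and>
    (\<forall>x. ((\<lambda>t. P (vupd x i t)) has_real_derivative P' x) (at (x $ i)))"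
  using assms
proof (induction rule: poly_wo.induct)
  case (const d c)
  show ?case by (auto intro!: exI[of _ "\<lambda>x. 0"] poly_wo.const)
next
  case (mult_coord d P l)
  then obtain P' where P': "poly_wo m (d - 1) P'" "d = 0 \<longrightarrow> P' = (\<lambda>x. 0)"
    "\<And>x. ((\<lambda>t. P (vupd x i t)) has_real_derivative P' x) (at (x $ i))"
    by blast
  define \<delta> where "\<delta> = (if i = l then P else (\<lambda>x. 0))"
  have "poly_wo m d \<delta>"
    using mult_coord.hyps(1) by (simp add: \<delta>_def poly_wo.const)
  moreover have "poly_wo m d (\<lambda>x. x $ l * P' x)"
    using P'(2) poly_wo.mult_coord[OF P'(1) mult_coord.hyps(2)] poly_wo.const[of m 0 0]
    by (cases d) auto
  moreover have "((\<lambda>t. vupd x i t $ l * P (vupd x i t)) has_real_derivative \<delta> x + x $ l * P' x)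
      (at (x $ i))" for x
  proof -
    have "((\<lambda>t. vupd x i t $ l) has_real_derivative (if i = l then 1 else 0)) (at (x $ i))"
      by (cases "i = l") (auto intro: derivative_eq_intros)
    from DERIV_mult[OF this P'(3)] show ?thesis
      by (rule DERIV_cong) (simp add: \<delta>_def mult.commute)
  qed
  ultimately show ?case
    by (intro exI[of _ "\<lambda>x. \<delta> x + x $ l * P' x"]) (simp add: poly_wo.add)
next
  case (add d P Q)
  then obtain P' Q' where "poly_wo m (d - 1) P'" "d = 0 \<longrightarrow> P' = (\<lambda>x. 0)"
    "\<And>x. ((\<lambda>t. P (vupd x i t)) has_real_derivative P' x) (at (x $ i))"
    "poly_wo m (d - 1) Q'" "d = 0 \<longrightarrow> Q' = (\<lambda>x. 0)"
    "\<And>x. ((\<lambda>t. Q (vupd x i t)) has_real_derivative Q' x) (at (x $ i))"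
    by blast
  then show ?case
    by (intro exI[of _ "\<lambda>x. P' x + Q' x"]) (auto intro: poly_wo.add DERIV_add)
next
  case (mono d P e)
  then obtain P' where "poly_wo m (d - 1) P'" "d = 0 \<longrightarrow> P' = (\<lambda>x. 0)"
    "\<And>x. ((\<lambda>t. P (vupd x i t)) has_real_derivative P' x) (at (x $ i))"
    by blast
  with mono.hyps(2) show ?case
    by (intro exI[of _ P']) (auto intro: poly_wo.mono)
qed

lemma poly_wo_partial:
  assumes "poly_wo m d P" "i \<noteq> m"
  shows "((\<lambda>t. P (vupd x i t)) has_real_derivative partial i P x) (at (x $ i))"
    and "poly_wo m (d - 1) (partial i P)"
    and "d = 0 \<Longrightarrow> partial i P = (\<lambda>x. 0)"
proof -
  obtain P' where P': "poly_wo m (d - 1) P'" "d = 0 \<longrightarrow> P' = (\<lambda>x. 0)"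
    "\<And>x. ((\<lambda>t. P (vupd x i t)) has_real_derivative P' x) (at (x $ i))"
    using poly_wo_has_partial[OF assms] by blast
  moreover have "partial i P = P'"
    unfolding partial_def using P'(3) by (auto intro!: ext DERIV_imp_deriv)
  ultimately show "((\<lambda>t. P (vupd x i t)) has_real_derivative partial i P x) (at (x $ i))"
    and "poly_wo m (d - 1) (partial i P)" and "d = 0 \<Longrightarrow> partial i P = (\<lambda>x. 0)"
    by auto
qed

lemma poly_wo_sum:
  "finite S \<Longrightarrow> (\<And>i. i \<in> S \<Longrightarrow> poly_wo m d (F i)) \<Longrightarrow> poly_wo m d (\<lambda>x. \<Sum>i\<in>S. F i x)"
  by (induction S rule: finite_induct) (auto intro: poly_wo.const poly_wo.add)

lemma poly_wo_laplacian_without: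
  assumes "poly_wo m d P"
  shows "poly_wo m (d - 2) (laplacian_without m P)"
proof -
  have "poly_wo m (d - 2) (partial i (partial i P))" if "i \<noteq> m" for i
    using poly_wo_partial(2)[OF poly_wo_partial(2)[OF assms that] that] by (simp add: numeral_2_eq_2)
  then show ?thesis
    unfolding laplacian_without_def by (intro poly_wo_sum) (auto simp: numeral_2_eq_2)
qed

lemma poly_wo_funpow_laplacian_without:
  "poly_wo m d P \<Longrightarrow> poly_wo m (d - 2 * p) ((laplacian_without m ^^ p) P)"
  by (induction p) (auto dest: poly_wo_laplacian_without simp: diff_diff_left)

lemma laplacian_without_eq_0:
  assumes "poly_wo m d P" "d \<le> 1"
  shows "laplacian_without m P = (\<lambda>x. 0)"
proof -
  have "partial i (partial i P) = (\<lambda>x. 0)" if "i \<noteq> m" for i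
    using poly_wo_partial(2)[OF assms(1) that] assms(2) that by (auto intro: poly_wo_partial(3))
  then show ?thesis
    unfolding laplacian_without_def by (simp add: numeral_2_eq_2)
qed

lemma funpow_laplacian_without_eq_0:
  "poly_wo m d P \<Longrightarrow> d \<le> 2 * p + 1 \<Longrightarrow> (laplacian_without m ^^ Suc p) P = (\<lambda>x. 0)"
  using laplacian_without_eq_0[OF poly_wo_funpow_laplacian_without, of m d P p] by simp

lemma poly_wo_power_mult:
  "poly_wo m d P \<Longrightarrow> i \<noteq> m \<Longrightarrow> poly_wo m (n + d) (\<lambda>x. x $ i ^ n * P x)"
proof (induction n)
  case (Suc n)
  then show ?case
    using poly_wo.mult_coord[OF Suc.IH[OF Suc.prems] Suc.prems(2)] by (simp add: mult.assoc)
qed simp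

lemma poly_wo_mono_wo: "poly_wo m (deg_wo m \<beta>) (mono_wo m \<beta>)"
proof -
  have "S \<subseteq> UNIV - {m} \<Longrightarrow> poly_wo m (\<Sum>i\<in>S. \<beta> i) (\<lambda>x. \<Prod>i\<in>S. x $ i ^ \<beta> i)" for S
  proof (induction S rule: infinite_finite_induct)
    case (insert a S)
    then show ?case
      using poly_wo_power_mult[of m "sum \<beta> S" "\<lambda>x. \<Prod>i\<in>S. x $ i ^ \<beta> i" a "\<beta> a"] by auto
  qed (simp_all add: poly_wo.const)
  then show ?thesis
    unfolding mono_wo_def deg_wo_def by simp
qed

lemma partial_sum_mult:
  assumes "finite S" "\<And>p. p \<in> S \<Longrightarrow> poly_wo m (d p) (P p)" "i \<noteq> m"
  shows "partial i (\<lambda>x. \<Sum>p\<in>S. g p (x $ m) * P p x) = (\<lambda>x. \<Sum>p\<in>S. g p (x $ m) * partial i (P p) x)"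
proof
  fix x
  have "((\<lambda>t. \<Sum>p\<in>S. g p (x $ m) * P p (vupd x i t)) has_real_derivative
      (\<Sum>p\<in>S. g p (x $ m) * partial i (P p) x)) (at (x $ i))"
    by (intro DERIV_sum DERIV_cmult poly_wo_partial(1)[OF assms(2) assms(3)])
  then show "partial i (\<lambda>x. \<Sum>p\<in>S. g p (x $ m) * P p x) x = (\<Sum>p\<in>S. g p (x $ m) * partial i (P p) x)"
    unfolding partial_def using assms(3) by (auto intro!: DERIV_imp_deriv)
qed

lemma partial_mult:
  "poly_wo m d P \<Longrightarrow> i \<noteq> m \<Longrightarrow>
    partial i (\<lambda>x. g (x $ m) * P x) = (\<lambda>x. g (x $ m) * partial i P x)"
  using partial_sum_mult[of "{()}" m "\<lambda>_. d" "\<lambda>_. P" i "\<lambda>_. g"] by simp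

lemma partial_m_sum_mult:
  assumes "finite S" "\<And>p. p \<in> S \<Longrightarrow> poly_wo m (d p) (P p)"
    and "\<And>p t. p \<in> S \<Longrightarrow> (g p has_real_derivative g' p t) (at t)"
  shows "partial m (\<lambda>x. \<Sum>p\<in>S. g p (x $ m) * P p x) = (\<lambda>x. \<Sum>p\<in>S. g' p (x $ m) * P p x)"
proof
  fix x
  have "((\<lambda>t. \<Sum>p\<in>S. g p t * P p x) has_real_derivative (\<Sum>p\<in>S. g' p (x $ m) * P p x)) (at (x $ m))"
    by (intro DERIV_sum DERIV_cmult_right assms(3))
  moreover have "(\<lambda>t. \<Sum>p\<in>S. g p (vupd x m t $ m) * P p (vupd x m t)) = (\<lambda>t. \<Sum>p\<in>S. g p t * P p x)"
    using poly_wo_vupd[OF assms(2)] by simp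
  ultimately show "partial m (\<lambda>x. \<Sum>p\<in>S. g p (x $ m) * P p x) x = (\<Sum>p\<in>S. g' p (x $ m) * P p x)"
    unfolding partial_def by (auto intro!: DERIV_imp_deriv)
qed

lemma partial_m_mult:
  "poly_wo m d P \<Longrightarrow> (\<And>t. (g has_real_derivative g' t) (at t)) \<Longrightarrow>
    partial m (\<lambda>x. g (x $ m) * P x) = (\<lambda>x. g' (x $ m) * P x)"
  using partial_m_sum_mult[of "{()}" m "\<lambda>_. d" "\<lambda>_. P" "\<lambda>_. g" "\<lambda>_. g'"] by simp

lemma laplacian_sum_mult:
  assumes S: "finite S" and P: "\<And>p. p \<in> S \<Longrightarrow> poly_wo m (d p) (P p)"
    and g: "\<And>p t. p \<in> S \<Longrightarrow> (g p has_real_derivative g' p t) (at t)"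
    and g': "\<And>p t. p \<in> S \<Longrightarrow> (g' p has_real_derivative g'' p t) (at t)"
  shows "laplacian (\<lambda>x. \<Sum>p\<in>S. g p (x $ m) * P p x) =
    (\<lambda>x. \<Sum>p\<in>S. g'' p (x $ m) * P p x + g p (x $ m) * laplacian_without m (P p) x)"
proof
  fix x
  let ?F = "\<lambda>x. \<Sum>p\<in>S. g p (x $ m) * P p x"
  have mm: "partial m (partial m ?F) = (\<lambda>x. \<Sum>p\<in>S. g'' p (x $ m) * P p x)"
    by (simp add: partial_m_sum_mult[OF S P g] partial_m_sum_mult[OF S P g'])
  have ii: "partial i (partial i ?F) = (\<lambda>x. \<Sum>p\<in>S. g p (x $ m) * partial i (partial i (P p)) x)"
    if "i \<noteq> m" for i
    using partial_sum_mult[where d=d and P=P, OF S P that]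
      partial_sum_mult[where d="\<lambda>p. d p - 1" and P="\<lambda>p. partial i (P p)", OF S poly_wo_partial(2)[OF P that] that]
    by simp
  have "laplacian ?F x = partial m (partial m ?F) x + (\<Sum>i\<in>UNIV - {m}. partial i (partial i ?F) x)"
    unfolding laplacian_def by (simp add: numeral_2_eq_2 sum.remove[of UNIV m])
  also have "\<dots> = (\<Sum>p\<in>S. g'' p (x $ m) * P p x) +
      (\<Sum>i\<in>UNIV - {m}. \<Sum>p\<in>S. g p (x $ m) * partial i (partial i (P p)) x)"
    by (simp add: mm ii)
  also have "(\<Sum>i\<in>UNIV - {m}. \<Sum>p\<in>S. g p (x $ m) * partial i (partial i (P p)) x) =
      (\<Sum>p\<in>S. g p (x $ m) * laplacian_without m (P p) x)"
    unfolding laplacian_without_def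
    by (simp add: sum.swap[of _ "UNIV - {m}"] sum_distrib_left numeral_2_eq_2)
  finally show "laplacian ?F x =
      (\<Sum>p\<in>S. g'' p (x $ m) * P p x + g p (x $ m) * laplacian_without m (P p) x)"
    by (simp add: sum.distrib)
qed

lemma laplacian_without_mult:
  assumes "poly_wo m d P"
  shows "laplacian_without m (\<lambda>x. g (x $ m) * P x) = (\<lambda>x. g (x $ m) * laplacian_without m P x)"
proof -
  have "partial i (partial i (\<lambda>x. g (x $ m) * P x)) = (\<lambda>x. g (x $ m) * partial i (partial i P) x)"
    if "i \<noteq> m" for i
    using partial_mult[OF assms that] partial_mult[OF poly_wo_partial(2)[OF assms that] that] by simp
  then show ?thesis
    unfolding laplacian_without_def by (simp add: numeral_2_eq_2 sum_distrib_left)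
qed

lemma funpow_laplacian_without_mult:
  "poly_wo m d P \<Longrightarrow>
    (laplacian_without m ^^ p) (\<lambda>x. g (x $ m) * P x) = (\<lambda>x. g (x $ m) * (laplacian_without m ^^ p) P x)"
  by (induction p) (auto simp: laplacian_without_mult[OF poly_wo_funpow_laplacian_without])

lemma funpow_partial_m_antider1_mult:
  assumes P: "poly_wo m d P" and h: "continuous_on UNIV h" and "j \<le> n"
  shows "(partial m ^^ j) (\<lambda>x. (antider1 x0 ^^ n) h (x $ m) * P x) =
    (\<lambda>x. (antider1 x0 ^^ (n - j)) h (x $ m) * P x)"
  using \<open>j \<le> n\<close>
proof (induction j)
  case (Suc j)
  then have "n - j = Suc (n - Suc j)"
    by simp
  with Suc show ?case
    using partial_m_mult[OF P has_real_derivative_funpow_antider1[OF h]] by simp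
qed simp

lemma antider_mult:
  "poly_wo m d P \<Longrightarrow> antider x0 m (\<lambda>x. g (x $ m) * P x) = (\<lambda>x. antider1 x0 g (x $ m) * P x)"
  unfolding antider_def antider1_def oint_def by (auto simp: fun_eq_iff poly_wo_vupd)

lemma funpow_antider_mult:
  "poly_wo m d P \<Longrightarrow>
    (antider x0 m ^^ n) (\<lambda>x. g (x $ m) * P x) = (\<lambda>x. (antider1 x0 ^^ n) g (x $ m) * P x)"
  by (induction n) (auto simp: antider_mult)

lemma sum_mult_telescope:
  fixes c c' X :: "nat \<Rightarrow> real"
  assumes "c 0 = c' 0" "\<And>p. c (Suc p) = c' (Suc p) + c' p"
  shows "(\<Sum>p=0..n. c' p * X p) + (\<Sum>p=0..n. c' p * X (Suc p)) = (\<Sum>p=0..n. c p * X p) + c' n * X (Suc n)"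
  by (induction n) (simp_all add: assms algebra_simps)

(* The coefficient of t^p in (1 + t)^(-k). *)
definition neg_binomial_coeff :: "nat \<Rightarrow> nat \<Rightarrow> real" where
  "neg_binomial_coeff k p = (-1) ^ p * real ((k + p - 1) choose p)"

lemma neg_binomial_coeff_0_left: "neg_binomial_coeff 0 p = (if p = 0 then 1 else 0)"
  by (simp add: neg_binomial_coeff_def)

lemma neg_binomial_coeff_0_right: "neg_binomial_coeff k 0 = 1"
  by (simp add: neg_binomial_coeff_def)

lemma neg_binomial_coeff_Suc_Suc:
  "neg_binomial_coeff k (Suc p) = neg_binomial_coeff (Suc k) (Suc p) + neg_binomial_coeff (Suc k) p"
proof -
  have "Suc (k + p) choose Suc p = (k + p choose p) + (k + p choose Suc p)"
    by simp
  then show ?thesis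
    by (simp add: neg_binomial_coeff_def algebra_simps)
qed

(* The series Q of the statement with k as a parameter; a n plays the role of A^n f. *)
definition laplacian_primitive ::
    "'n \<Rightarrow> nat \<Rightarrow> (nat \<Rightarrow> real \<Rightarrow> real) \<Rightarrow> (real^'n \<Rightarrow> real) \<Rightarrow> nat \<Rightarrow> real^'n \<Rightarrow> real" where
  "laplacian_primitive m lam a M k = (\<lambda>x. \<Sum>p=0..lam.
     neg_binomial_coeff k p * a (2 * k + 2 * p) (x $ m) * (laplacian_without m ^^ p) M x)"

lemma laplacian_laplacian_primitive_Suc:
  assumes M: "poly_wo m d M" "d \<le> 2 * lam + 1"
    and a: "\<And>n t. (a (Suc n) has_real_derivative a n t) (at t)"
  shows "laplacian (laplacian_primitive m lam a M (Suc k)) = laplacian_primitive m lam a M k"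
proof
  fix x
  let ?c = "neg_binomial_coeff (Suc k)" and ?L = "\<lambda>p. (laplacian_without m ^^ p) M"
  define X where "X r = a (2 * k + 2 * r) (x $ m) * ?L r x" for r
  have lap: "laplacian (laplacian_primitive m lam a M (Suc k)) =
      (\<lambda>x. \<Sum>p=0..lam. ?c p * a (2 * k + 2 * p) (x $ m) * ?L p x
        + ?c p * a (2 * Suc k + 2 * p) (x $ m) * laplacian_without m (?L p) x)"
    unfolding laplacian_primitive_def
  proof (rule laplacian_sum_mult[where d="\<lambda>p. d - 2 * p" and P="?L"
        and g="\<lambda>p t. ?c p * a (2 * Suc k + 2 * p) t"
        and g'="\<lambda>p t. ?c p * a (Suc (2 * k + 2 * p)) t"
        and g''="\<lambda>p t. ?c p * a (2 * k + 2 * p) t"])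
    show "poly_wo m (d - 2 * p) (?L p)" for p
      by (rule poly_wo_funpow_laplacian_without[OF M(1)])
    show "((\<lambda>t. ?c p * a (2 * Suc k + 2 * p) t) has_real_derivative ?c p * a (Suc (2 * k + 2 * p)) t) (at t)"
      for p t
      using DERIV_cmult[OF a[of "Suc (2 * k + 2 * p)"]] by simp
    show "((\<lambda>t. ?c p * a (Suc (2 * k + 2 * p)) t) has_real_derivative ?c p * a (2 * k + 2 * p) t) (at t)"
      for p t
      by (intro DERIV_cmult a)
  qed simp
  have "laplacian (laplacian_primitive m lam a M (Suc k)) x =
      (\<Sum>p=0..lam. ?c p * X p) + (\<Sum>p=0..lam. ?c p * X (Suc p))"
  proof -
    have "X (Suc p) = a (2 * Suc k + 2 * p) (x $ m) * laplacian_without m (?L p) x" for p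
      by (simp add: X_def)
    then show ?thesis
      unfolding lap sum.distrib[symmetric] by (simp add: X_def mult.assoc)
  qed
  also have "\<dots> = (\<Sum>p=0..lam. neg_binomial_coeff k p * X p) + ?c lam * X (Suc lam)"
    by (rule sum_mult_telescope) (simp_all only: neg_binomial_coeff_0_right neg_binomial_coeff_Suc_Suc[of k])
  also have "X (Suc lam) = 0"
    using funpow_laplacian_without_eq_0[OF M] by (simp add: X_def)
  finally show "laplacian (laplacian_primitive m lam a M (Suc k)) x = laplacian_primitive m lam a M k x"
    by (simp add: laplacian_primitive_def X_def mult.assoc)
qed

lemma funpow_laplacian_laplacian_primitive:
  assumes "poly_wo m d M" "d \<le> 2 * lam + 1"
    and "\<And>n t. (a (Suc n) has_real_derivative a n t) (at t)"
  shows "(laplacian ^^ k) (laplacian_primitive m lam a M k) = (\<lambda>x. a 0 (x $ m) * M x)"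
proof (induction k)
  case 0
  have "laplacian_primitive m lam a M 0 x = (\<Sum>p=0..lam. if p = 0 then a 0 (x $ m) * M x else 0)" for x
    unfolding laplacian_primitive_def by (intro sum.cong) (auto simp: neg_binomial_coeff_0_left)
  then show ?case
    by auto
next
  case (Suc k)
  then show ?case
    by (simp only: funpow_Suc_right comp_def laplacian_laplacian_primitive_Suc[where a=a, OF assms])
qed

lemma laplacian_primitive_eq_antider_series:
  assumes "poly_wo m d M"
  shows "laplacian_primitive m lam (\<lambda>n. (antider1 x0 ^^ n) f) M k =
    (\<lambda>x. \<Sum>p=0..lam. neg_binomial_coeff k p *
      (antider x0 m ^^ (2 * k + 2 * p)) ((laplacian_without m ^^ p) (\<lambda>x. f (x $ m) * M x)) x)"
  unfolding laplacian_primitive_def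
  by (simp add: funpow_laplacian_without_mult[OF assms] mult.assoc
      funpow_antider_mult[OF poly_wo_funpow_laplacian_without[OF assms]])

lemma laplacian_primitive_eq_partial_series:
  assumes M: "poly_wo m d M" and f: "continuous_on UNIV f"
  shows "laplacian_primitive m lam (\<lambda>n. (antider1 x0 ^^ n) f) M k =
    (\<lambda>x. \<Sum>p=0..lam. neg_binomial_coeff k p * (partial m ^^ (2 * lam - 2 * p))
      ((laplacian_without m ^^ p) ((antider x0 m ^^ (2 * lam + 2 * k)) (\<lambda>x. f (x $ m) * M x))) x)"
proof -
  have "(partial m ^^ (2 * lam - 2 * p))
      ((laplacian_without m ^^ p) ((antider x0 m ^^ (2 * lam + 2 * k)) (\<lambda>x. f (x $ m) * M x))) =
    (\<lambda>x. (antider1 x0 ^^ (2 * k + 2 * p)) f (x $ m) * (laplacian_without m ^^ p) M x)"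
    if "p \<le> lam" for p
    using that unfolding funpow_antider_mult[OF M] funpow_laplacian_without_mult[OF M]
    by (subst funpow_partial_m_antider1_mult[OF poly_wo_funpow_laplacian_without[OF M] f])
       (simp_all add: diff_diff_right)
  then show ?thesis
    unfolding laplacian_primitive_def by (intro ext sum.cong) (auto simp: mult.assoc)
qed

lemma le_twice_nat_ceiling_half: "d \<le> 2 * nat \<lceil>(real d - 1) / 2\<rceil> + 1"
proof -
  define n where "n = nat \<lceil>(real d - 1) / 2\<rceil>"
  have "(real d - 1) / 2 \<le> real n"
    unfolding n_def by (rule real_nat_ceiling_ge)
  then have "real d \<le> real (2 * n + 1)"
    by simp
  then show ?thesis
    unfolding n_def by (simp only: of_nat_le_iff)
qed

theorem corollary5p3:
  fixes k :: nat and m :: "'n::finite" and \<beta> :: "'n \<Rightarrow> nat"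
    and f :: "real \<Rightarrow> real" and x0 :: real
    and q W Q1 Q2 :: "real^'n \<Rightarrow> real" and lam :: nat
  assumes f_C1: "f C1_differentiable_on UNIV"
    and q_def: "q = (\<lambda>x. f (x $ m) * mono_wo m \<beta> x)"
    and lam_def: "lam = nat \<lceil>(real (deg_wo m \<beta>) - 1) / 2\<rceil>"
    and W_def: "W = (antider x0 m ^^ (2 * lam + 2 * k)) q"
    and Q1_def: "Q1 = (\<lambda>x. \<Sum>p = 0..lam. (-1) ^ p * real ((k + p - 1) choose p) *
                   (partial m ^^ (2 * lam - 2 * p)) ((laplacian_without m ^^ p) W) x)"
    and Q2_def: "Q2 = (\<lambda>x. \<Sum>p = 0..lam. (-1) ^ p * real ((k + p - 1) choose p) *
                   (antider x0 m ^^ (2 * k + 2 * p)) ((laplacian_without m ^^ p) q) x)"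
  shows "(\<forall>x. W x = mono_wo m \<beta> x * (antider1 x0 ^^ (2 * lam + 2 * k)) f (x $ m))
       \<and> Q1 = Q2 \<and> (laplacian ^^ k) Q1 = q"
proof -
  let ?Q = "laplacian_primitive m lam (\<lambda>n. (antider1 x0 ^^ n) f) (mono_wo m \<beta>) k"
  have f: "continuous_on UNIV f"
    using f_C1 by (rule C1_differentiable_imp_continuous_on)
  have M: "poly_wo m (deg_wo m \<beta>) (mono_wo m \<beta>)" "deg_wo m \<beta> \<le> 2 * lam + 1"
    unfolding lam_def by (rule poly_wo_mono_wo le_twice_nat_ceiling_half)+
  have W: "\<forall>x. W x = mono_wo m \<beta> x * (antider1 x0 ^^ (2 * lam + 2 * k)) f (x $ m)"
    unfolding W_def q_def funpow_antider_mult[OF M(1)] by simp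
  have Q1: "Q1 = ?Q"
    unfolding Q1_def W_def q_def laplacian_primitive_eq_partial_series[OF M(1) f]
    by (simp add: neg_binomial_coeff_def)
  have Q2: "Q2 = ?Q"
    unfolding Q2_def q_def laplacian_primitive_eq_antider_series[OF M(1)]
    by (simp add: neg_binomial_coeff_def)
  have "(laplacian ^^ k) ?Q = q"
    using funpow_laplacian_laplacian_primitive[OF M, of "\<lambda>n. (antider1 x0 ^^ n) f" k]
      has_real_derivative_funpow_antider1[OF f]
    by (simp add: q_def)
  with W Q1 Q2 show ?thesis
    by simp
qed

end
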